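(* Let $G=(V,E)$ be a finite undirected graph with $|E|>0$, and let $\mathcal{A}_G$ be the DPA defined below. Then $\mathcal{A}_G$ has informative right-congruence.
   Context: $\Sigma:=V\cup\{x_v\mid v\in V\}$ (with fresh letters $x_v$). $\mathcal{A}_G=(\Sigma,V\cup\{q_G\},\delta_G,q_G,c_G)$ has state set $V\cup\{q_G\}$, initial state $q_G$, and for all $u,v\in V$ with $u\neq v$: $\delta_G(q_G,u)=u$, $\delta_G(q_G,x_u)=q_G$, $\delta_G(u,u)=u$, $\delta_G(u,x_u)=u$, $\delta_G(u,v)=q_G$, $\delta_G(u,x_v)=q_G$; priorities $c_G(q_G)=1$ and $c_G(u)=0$ for $u\in V$. A DPA accepts $\alpha\in\Sigma^\omega$ iff the maximal priority among states visited infinitely often in its run is even. For $L\subseteq\Sigma^\omega$, $u\sim_L v$ iff for all $\alpha\in\Sigma^\omega$: $u\alpha\in L\iff v\alpha\in L$. An automaton accepting $L$ has informative right-congruence if its transition system is isomorphic to the transition system induced by $\sim_L$ (states the classes $[u]$, initial $[\epsilon]$, transitions $[u]\xrightarrow{\sigma}[u\sigma]$). *)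

theory Defs
  imports Main "HOL-Library.Omega_Words_Fun"
begin

fun dpa_run :: "('q \<Rightarrow> 'a \<Rightarrow> 'q) \<Rightarrow> 'q \<Rightarrow> 'a word \<Rightarrow> nat \<Rightarrow> 'q" where
  "dpa_run \<delta> q0 w 0 = q0"
| "dpa_run \<delta> q0 w (Suc n) = \<delta> (dpa_run \<delta> q0 w n) (w n)"

definition dpa_accepts :: "('q \<Rightarrow> 'a \<Rightarrow> 'q) \<Rightarrow> 'q \<Rightarrow> ('q \<Rightarrow> nat) \<Rightarrow> 'a word \<Rightarrow> bool" where
  "dpa_accepts \<delta> q0 c w \<longleftrightarrow> even (Max (c ` limit (dpa_run \<delta> q0 w)))"

definition dpa_lang :: "'a set \<Rightarrow> ('q \<Rightarrow> 'a \<Rightarrow> 'q) \<Rightarrow> 'q \<Rightarrow> ('q \<Rightarrow> nat) \<Rightarrow> 'a word set" where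
  "dpa_lang \<Sigma> \<delta> q0 c = {w. (\<forall>n. w n \<in> \<Sigma>) \<and> dpa_accepts \<delta> q0 c w}"

definition right_cong :: "'a set \<Rightarrow> 'a word set \<Rightarrow> ('a list \<times> 'a list) set" where
  "right_cong \<Sigma> L = {(u, v). u \<in> lists \<Sigma> \<and> v \<in> lists \<Sigma> \<and>
      (\<forall>\<alpha>. (\<forall>n. \<alpha> n \<in> \<Sigma>) \<longrightarrow> (u \<frown> \<alpha> \<in> L \<longleftrightarrow> v \<frown> \<alpha> \<in> L))}"

text \<open>Informative right-congruence: the transition system (Q, delta, q0) is isomorphic
  to the transition system induced by the right congruence of the accepted language,
  whose states are the classes [u], initial state [epsilon], transitions [u] -sigma-> [u sigma].\<close>
definition informative_rc :: "'a set \<Rightarrow> 'q set \<Rightarrow> ('q \<Rightarrow> 'a \<Rightarrow> 'q) \<Rightarrow> 'q \<Rightarrow> ('q \<Rightarrow> nat) \<Rightarrow> bool" where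
  "informative_rc \<Sigma> Q \<delta> q0 c \<longleftrightarrow>
     (let R = right_cong \<Sigma> (dpa_lang \<Sigma> \<delta> q0 c) in
      \<exists>f. bij_betw f Q (lists \<Sigma> // R) \<and>
          f q0 = R `` {[]} \<and>
          (\<forall>q\<in>Q. \<forall>\<sigma>\<in>\<Sigma>. \<forall>u\<in>f q. f (\<delta> q \<sigma>) = R `` {u @ [\<sigma>]}))"

datatype 'v letter = Vtx 'v | Xl 'v
datatype 'v state = QG | St 'v

definition sigmaG :: "'v set \<Rightarrow> 'v letter set" where
  "sigmaG V = Vtx ` V \<union> Xl ` V"

definition statesG :: "'v set \<Rightarrow> 'v state set" where
  "statesG V = St ` V \<union> {QG}"

fun deltaG :: "'v state \<Rightarrow> 'v letter \<Rightarrow> 'v state" where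
  "deltaG QG (Vtx u) = St u"
| "deltaG QG (Xl u) = QG"
| "deltaG (St u) (Vtx v) = (if u = v then St u else QG)"
| "deltaG (St u) (Xl v) = (if u = v then St u else QG)"

fun cG :: "'v state \<Rightarrow> nat" where
  "cG QG = 1"
| "cG (St u) = 0"

definition undirected_graph :: "'v set \<Rightarrow> 'v set set \<Rightarrow> bool" where
  "undirected_graph V E \<longleftrightarrow> finite V \<and>
     (\<forall>e\<in>E. \<exists>u v. u \<in> V \<and> v \<in> V \<and> u \<noteq> v \<and> e = {u, v})"

end

theory Submission
  imports Defs
begin

text \<open>The run of a DPA after reading a finite word u depends on u only through the state
  it reaches, so words reaching the same state are right-congruent.  Conversely, in A_G two
  distinct states are told apart by a constant suffix x_w^omega: it is accepted exactly from
  the state w.  Since every state of A_G is reachable, the right congruence is exactly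
  "reaching the same state", and the states correspond bijectively to its classes.\<close>

lemma dpa_run_eq_foldl: "dpa_run \<delta> q w n = foldl \<delta> q (prefix n w)"
  by (induction n) auto

lemma limit_dpa_run_conc:
  "limit (dpa_run \<delta> q (u \<frown> \<alpha>)) = limit (dpa_run \<delta> (foldl \<delta> q u) \<alpha>)"
proof -
  have "suffix (length u) (dpa_run \<delta> q (u \<frown> \<alpha>)) = dpa_run \<delta> (foldl \<delta> q u) \<alpha>"
    by (rule ext) (simp add: dpa_run_eq_foldl)
  then show ?thesis
    by (metis limit_suffix)
qed

lemma dpa_accepts_conc:
  "dpa_accepts \<delta> q c (u \<frown> \<alpha>) \<longleftrightarrow> dpa_accepts \<delta> (foldl \<delta> q u) c \<alpha>"
  by (simp add: dpa_accepts_def limit_dpa_run_conc)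

lemma conc_in_dpa_lang_iff:
  assumes "u \<in> lists \<Sigma>" and "\<forall>n. \<alpha> n \<in> \<Sigma>"
  shows "u \<frown> \<alpha> \<in> dpa_lang \<Sigma> \<delta> q0 c \<longleftrightarrow> dpa_accepts \<delta> (foldl \<delta> q0 u) c \<alpha>"
proof -
  have "(u \<frown> \<alpha>) n \<in> \<Sigma>" for n
    using assms by (cases "n < length u") auto
  then show ?thesis
    by (auto simp: dpa_lang_def dpa_accepts_conc)
qed

lemma right_cong_dpa_lang_eq_same_state:
  assumes separating: "\<And>p q. p \<in> foldl \<delta> q0 ` lists \<Sigma> \<Longrightarrow> q \<in> foldl \<delta> q0 ` lists \<Sigma> \<Longrightarrow> p \<noteq> q \<Longrightarrow>
      \<exists>\<alpha>. (\<forall>n. \<alpha> n \<in> \<Sigma>) \<and> dpa_accepts \<delta> p c \<alpha> \<noteq> dpa_accepts \<delta> q c \<alpha>"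
  shows "right_cong \<Sigma> (dpa_lang \<Sigma> \<delta> q0 c) =
    {(u, v). u \<in> lists \<Sigma> \<and> v \<in> lists \<Sigma> \<and> foldl \<delta> q0 u = foldl \<delta> q0 v}"
proof -
  have "(u, v) \<in> right_cong \<Sigma> (dpa_lang \<Sigma> \<delta> q0 c) \<longleftrightarrow>
      u \<in> lists \<Sigma> \<and> v \<in> lists \<Sigma> \<and> foldl \<delta> q0 u = foldl \<delta> q0 v" for u v
  proof (cases "u \<in> lists \<Sigma> \<and> v \<in> lists \<Sigma>")
    case True
    then have "(u, v) \<in> right_cong \<Sigma> (dpa_lang \<Sigma> \<delta> q0 c) \<longleftrightarrow>
        (\<forall>\<alpha>. (\<forall>n. \<alpha> n \<in> \<Sigma>) \<longrightarrow>
          dpa_accepts \<delta> (foldl \<delta> q0 u) c \<alpha> \<longleftrightarrow> dpa_accepts \<delta> (foldl \<delta> q0 v) c \<alpha>)"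
      by (auto simp: right_cong_def conc_in_dpa_lang_iff simp del: in_lists_conv_set)
    also have "\<dots> \<longleftrightarrow> foldl \<delta> q0 u = foldl \<delta> q0 v"
      using separating[of "foldl \<delta> q0 u" "foldl \<delta> q0 v"] True by auto
    finally show ?thesis
      using True by blast
  qed (auto simp: right_cong_def)
  then show ?thesis
    by auto
qed

lemma bij_betw_fibers_quotient:
  "bij_betw (\<lambda>y. {x \<in> A. g x = y}) (g ` A) (A // {(x, x'). x \<in> A \<and> x' \<in> A \<and> g x = g x'})"
    (is "bij_betw ?fiber _ (_ // ?R)")
proof (rule bij_betw_imageI)
  have class_eq: "?R `` {x} = ?fiber (g x)" if "x \<in> A" for x
    using that by auto
  show "inj_on ?fiber (g ` A)"
    by (rule inj_onI) blast
  have "A // ?R = (\<lambda>x. ?fiber (g x)) ` A"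
    unfolding quotient_def using class_eq by auto
  then show "?fiber ` g ` A = A // ?R"
    by (simp add: image_image)
qed

theorem informative_rc_if_reachable_and_separating:
  assumes reachable: "foldl \<delta> q0 ` lists \<Sigma> = Q"
    and separating: "\<And>p q. p \<in> Q \<Longrightarrow> q \<in> Q \<Longrightarrow> p \<noteq> q \<Longrightarrow>
      \<exists>\<alpha>. (\<forall>n. \<alpha> n \<in> \<Sigma>) \<and> dpa_accepts \<delta> p c \<alpha> \<noteq> dpa_accepts \<delta> q c \<alpha>"
  shows "informative_rc \<Sigma> Q \<delta> q0 c"
proof -
  define R where "R = right_cong \<Sigma> (dpa_lang \<Sigma> \<delta> q0 c)"
  define fiber where "fiber q = {u \<in> lists \<Sigma>. foldl \<delta> q0 u = q}" for q
  have R_eq: "R = {(u, v). u \<in> lists \<Sigma> \<and> v \<in> lists \<Sigma> \<and> foldl \<delta> q0 u = foldl \<delta> q0 v}"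
    unfolding R_def using separating reachable by (intro right_cong_dpa_lang_eq_same_state) blast
  have class_eq: "R `` {u} = fiber (foldl \<delta> q0 u)" if "u \<in> lists \<Sigma>" for u
    using that by (auto simp: R_eq fiber_def)
  have "bij_betw fiber Q (lists \<Sigma> // R)"
    using bij_betw_fibers_quotient[where g = "foldl \<delta> q0" and A = "lists \<Sigma>"]
    unfolding R_eq fiber_def reachable .
  moreover have "fiber q0 = R `` {[]}"
    using class_eq[of "[]"] by simp
  moreover have "fiber (\<delta> q \<sigma>) = R `` {u @ [\<sigma>]}" if "\<sigma> \<in> \<Sigma>" and "u \<in> fiber q" for q \<sigma> u
    using that class_eq[of "u @ [\<sigma>]"] by (simp add: fiber_def)
  ultimately show ?thesis
    unfolding informative_rc_def Let_def R_def[symmetric] by blast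
qed

lemma foldl_deltaG_in_statesG:
  "q \<in> statesG V \<Longrightarrow> u \<in> lists (sigmaG V) \<Longrightarrow> foldl deltaG q u \<in> statesG V"
proof (induction u arbitrary: q)
  case (Cons a u)
  then have "deltaG q a \<in> statesG V"
    by (cases a; cases q) (auto simp: statesG_def sigmaG_def)
  with Cons show ?case
    by simp
qed simp

lemma reachable_statesG: "foldl deltaG QG ` lists (sigmaG V) = statesG V"
proof
  show "foldl deltaG QG ` lists (sigmaG V) \<subseteq> statesG V"
    using foldl_deltaG_in_statesG[of QG] by (auto simp: statesG_def)
  have "St w \<in> foldl deltaG QG ` lists (sigmaG V)" if "w \<in> V" for w
    using that by (intro image_eqI[of _ _ "[Vtx w]"]) (auto simp: sigmaG_def)
  moreover have "QG \<in> foldl deltaG QG ` lists (sigmaG V)"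
    by (intro image_eqI[of _ _ "[]"]) auto
  ultimately show "statesG V \<subseteq> foldl deltaG QG ` lists (sigmaG V)"
    by (auto simp: statesG_def)
qed

lemma dpa_run_deltaG_Xl_Suc:
  "dpa_run deltaG q (\<lambda>_. Xl w) (Suc n) = (if q = St w then St w else QG)"
proof (induction n)
  case 0
  show ?case
    by (cases q) auto
next
  case (Suc n)
  show ?case
    by (simp only: dpa_run.simps(2)[of _ _ _ "Suc n"] Suc.IH) auto
qed

lemma dpa_accepts_deltaG_Xl: "dpa_accepts deltaG q cG (\<lambda>_. Xl w) \<longleftrightarrow> q = St w"
proof -
  let ?run = "dpa_run deltaG q (\<lambda>_. Xl w)" and ?s = "if q = St w then St w else QG"
  have "limit ?run = limit (suffix 1 ?run)"
    by simp
  also have "suffix 1 ?run = (\<lambda>_. ?s)"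
    by (rule ext) (simp add: dpa_run_deltaG_Xl_Suc del: dpa_run.simps(2))
  also have "limit (\<lambda>_::nat. ?s) = {?s}"
    by (auto simp: limit_iff_frequent)
  finally show ?thesis
    by (simp add: dpa_accepts_def)
qed

lemma statesG_separated:
  assumes "p \<in> statesG V" and "q \<in> statesG V" and "p \<noteq> q"
  shows "\<exists>\<alpha>. (\<forall>n. \<alpha> n \<in> sigmaG V) \<and> dpa_accepts deltaG p cG \<alpha> \<noteq> dpa_accepts deltaG q cG \<alpha>"
proof -
  obtain w where "w \<in> V" and "p = St w \<or> q = St w"
    using assms by (auto simp: statesG_def)
  then show ?thesis
    using \<open>p \<noteq> q\<close>
    by (intro exI[of _ "\<lambda>_. Xl w"]) (auto simp: sigmaG_def dpa_accepts_deltaG_Xl)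
qed

theorem lemma3:
  fixes V :: "'v set" and E :: "'v set set"
  assumes "undirected_graph V E"
    and "card E > 0"
  shows "informative_rc (sigmaG V) (statesG V) deltaG QG cG"
  using reachable_statesG statesG_separated
  by (rule informative_rc_if_reachable_and_separating)

end
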